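(* Let $(X,d^\star)$ be a $\star$-metric space and define $\tilde{d^\star}(x,y)=\min\{1,d^\star(x,y)\}$ for $x,y\in X$. Then $\tilde{d^\star}$ is a $\star$-metric on $X$ (for the same $t$-definer $\star$), and the topology induced by $\tilde{d^\star}$ on $X$ coincides with the topology induced by $d^\star$.
   Context: A $t$-definer is a function $\star:[0,\infty)\times[0,\infty)\to[0,\infty)$ such that for all $a,b,c\ge 0$: $a\star b=b\star a$; $a\star(b\star c)=(a\star b)\star c$; if $a\le b$ then $a\star c\le b\star c$; $a\star 0=a$; and $\star$ is continuous in its first variable with respect to the Euclidean topology. Given a nonempty set $X$ and a $t$-definer $\star$, a $\star$-metric on $X$ is a function $d:X\times X\to[0,\infty)$ such that for all $x,y,z\in X$: $d(x,y)=0$ iff $x=y$; $d(x,y)=d(y,x)$; and $d(x,y)\le d(x,z)\star d(z,y)$. The topology induced by a $\star$-metric $d$ consists of all $U\subseteq X$ such that for each $a\in U$ there is $r>0$ with $\{x\in X: d(a,x)<r\}\subseteq U$. *)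

theory Defs
  imports "HOL-Analysis.Analysis"
begin

text \<open>A t-definer: a binary operation on [0,\<infinity>) (represented on real, constrained to nonnegative arguments).\<close>
definition t_definer :: "(real \<Rightarrow> real \<Rightarrow> real) \<Rightarrow> bool" where
  "t_definer star \<longleftrightarrow>
     (\<forall>a\<ge>0. \<forall>b\<ge>0. star a b \<ge> 0) \<and>
     (\<forall>a\<ge>0. \<forall>b\<ge>0. star a b = star b a) \<and>
     (\<forall>a\<ge>0. \<forall>b\<ge>0. \<forall>c\<ge>0. star a (star b c) = star (star a b) c) \<and>
     (\<forall>a\<ge>0. \<forall>b\<ge>0. \<forall>c\<ge>0. a \<le> b \<longrightarrow> star a c \<le> star b c) \<and>
     (\<forall>a\<ge>0. star a 0 = a) \<and>
     (\<forall>c\<ge>0. continuous_on {0..} (\<lambda>a. star a c))"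

definition star_metric :: "'a set \<Rightarrow> (real \<Rightarrow> real \<Rightarrow> real) \<Rightarrow> ('a \<Rightarrow> 'a \<Rightarrow> real) \<Rightarrow> bool" where
  "star_metric X star d \<longleftrightarrow>
     (\<forall>x\<in>X. \<forall>y\<in>X. d x y \<ge> 0) \<and>
     (\<forall>x\<in>X. \<forall>y\<in>X. d x y = 0 \<longleftrightarrow> x = y) \<and>
     (\<forall>x\<in>X. \<forall>y\<in>X. d x y = d y x) \<and>
     (\<forall>x\<in>X. \<forall>y\<in>X. \<forall>z\<in>X. d x y \<le> star (d x z) (d z y))"

definition star_topology :: "'a set \<Rightarrow> ('a \<Rightarrow> 'a \<Rightarrow> real) \<Rightarrow> 'a set set" where
  "star_topology X d =
     {U. U \<subseteq> X \<and> (\<forall>a\<in>U. \<exists>r>0. {x\<in>X. d a x < r} \<subseteq> U)}"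

end

theory Submission
  imports Defs
begin

text \<open>A t-definer dominates both of its arguments, since star a b \<ge> star 0 a = a by
  monotonicity. Hence whenever one side of the triangle inequality is truncated at c, the right-hand
  side is already at least c, and the truncated inequality holds trivially; otherwise it is the
  original one. Truncation does not change the small balls, so it does not change the topology.\<close>

lemma t_definer_commute:
  assumes "t_definer star" "a \<ge> 0" "b \<ge> 0"
  shows "star a b = star b a"
proof -
  have "\<forall>a\<ge>0. \<forall>b\<ge>0. star a b = star b a"
    using assms(1) unfolding t_definer_def by (elim conjE)
  with assms(2,3) show ?thesis
    by blast
qed

lemma t_definer_mono_left:
  assumes "t_definer star" "a \<le> b" "a \<ge> 0" "c \<ge> 0"
  shows "star a c \<le> star b c"
proof -
  have "\<forall>a\<ge>0. \<forall>b\<ge>0. \<forall>c\<ge>0. a \<le> b \<longrightarrow> star a c \<le> star b c"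
    using assms(1) unfolding t_definer_def by (elim conjE)
  with assms(2-4) show ?thesis
    by simp
qed

lemma t_definer_zero_right:
  assumes "t_definer star" "a \<ge> 0"
  shows "star a 0 = a"
proof -
  have "\<forall>a\<ge>0. star a 0 = a"
    using assms(1) unfolding t_definer_def by (elim conjE)
  with assms(2) show ?thesis
    by blast
qed

lemma t_definer_ge_left:
  assumes "t_definer star" "a \<ge> 0" "b \<ge> 0"
  shows "a \<le> star a b"
proof -
  have "a = star 0 a"
    using t_definer_commute[OF assms(1), of 0 a] t_definer_zero_right[OF assms(1,2)] assms(2)
    by simp
  also have "\<dots> \<le> star b a"
    using assms t_definer_mono_left by simp
  also have "\<dots> = star a b"
    using assms t_definer_commute by simp
  finally show ?thesis .
qed

lemma t_definer_ge_right:
  assumes "t_definer star" "a \<ge> 0" "b \<ge> 0"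
  shows "b \<le> star a b"
  using assms t_definer_ge_left t_definer_commute by metis

lemma star_metric_truncate:
  assumes "t_definer star" "star_metric X star d" "c > 0"
  shows "star_metric X star (\<lambda>x y. min c (d x y))"
proof -
  have nonneg: "\<forall>x\<in>X. \<forall>y\<in>X. d x y \<ge> 0"
    using assms(2) unfolding star_metric_def by (elim conjE)
  have zero_iff: "\<forall>x\<in>X. \<forall>y\<in>X. d x y = 0 \<longleftrightarrow> x = y"
    using assms(2) unfolding star_metric_def by (elim conjE)
  have sym: "\<forall>x\<in>X. \<forall>y\<in>X. d x y = d y x"
    using assms(2) unfolding star_metric_def by (elim conjE)
  have triangle: "\<forall>x\<in>X. \<forall>y\<in>X. \<forall>z\<in>X. d x y \<le> star (d x z) (d z y)"
    using assms(2) unfolding star_metric_def by (elim conjE)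
  have "min c (d x y) \<le> star (min c (d x z)) (min c (d z y))"
    if "x \<in> X" "y \<in> X" "z \<in> X" for x y z
  proof -
    have nonneg_xzy: "min c (d x z) \<ge> 0" "min c (d z y) \<ge> 0"
      using nonneg assms(3) that by auto
    consider "d x z \<le> c" "d z y \<le> c" | "c < d x z" | "c < d z y"
      by linarith
    then show ?thesis
    proof cases
      case 1
      then have "star (min c (d x z)) (min c (d z y)) = star (d x z) (d z y)"
        by (simp add: min_absorb2)
      moreover have "d x y \<le> star (d x z) (d z y)"
        using triangle that by blast
      ultimately show ?thesis
        by linarith
    next
      case 2
      then show ?thesis
        using t_definer_ge_left[OF assms(1) nonneg_xzy] by simp
    next
      case 3
      then show ?thesis
        using t_definer_ge_right[OF assms(1) nonneg_xzy] by simp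
    qed
  qed
  moreover have "\<forall>x\<in>X. \<forall>y\<in>X. min c (d x y) = 0 \<longleftrightarrow> x = y"
    using zero_iff assms(3) by (force simp: min_def)
  ultimately show ?thesis
    using nonneg sym assms(3) unfolding star_metric_def by auto
qed

lemma star_topology_truncate:
  assumes "c > 0"
  shows "star_topology X (\<lambda>x y. min c (d x y)) = star_topology X d"
proof -
  have "(\<exists>r>0. {x\<in>X. min c (d a x) < r} \<subseteq> U) \<longleftrightarrow> (\<exists>r>0. {x\<in>X. d a x < r} \<subseteq> U)"
    for a U
  proof
    assume "\<exists>r>0. {x\<in>X. min c (d a x) < r} \<subseteq> U"
    then obtain r where "r > 0" "{x\<in>X. min c (d a x) < r} \<subseteq> U"
      by blast
    moreover have "{x\<in>X. d a x < r} \<subseteq> {x\<in>X. min c (d a x) < r}"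
      by auto
    ultimately show "\<exists>r>0. {x\<in>X. d a x < r} \<subseteq> U"
      by blast
  next
    assume "\<exists>r>0. {x\<in>X. d a x < r} \<subseteq> U"
    then obtain r where "r > 0" "{x\<in>X. d a x < r} \<subseteq> U"
      by blast
    moreover have "{x\<in>X. min c (d a x) < min c r} \<subseteq> {x\<in>X. d a x < r}"
      by auto
    ultimately show "\<exists>r>0. {x\<in>X. min c (d a x) < r} \<subseteq> U"
      using assms by (intro exI[of _ "min c r"]) auto
  qed
  then show ?thesis
    unfolding star_topology_def by simp
qed

theorem proposition3p8:
  fixes X :: "'a set" and star :: "real \<Rightarrow> real \<Rightarrow> real" and d :: "'a \<Rightarrow> 'a \<Rightarrow> real"
  assumes "X \<noteq> {}" and "t_definer star" and "star_metric X star d"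
  shows "star_metric X star (\<lambda>x y. min 1 (d x y)) \<and>
         star_topology X (\<lambda>x y. min 1 (d x y)) = star_topology X d"
  using star_metric_truncate[OF assms(2,3), of 1] star_topology_truncate[of 1] by simp

end
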